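(* Let $k\in\mathbb{Z}$, let $p$ be a positive integer and let $m$ be an odd positive integer. Then $$S_{p}^{(k)}(1,m)=\sum_{\nu=0}^{p}\binom{p}{\nu}E_{\nu}^{(k)}\sum_{i=0}^{p-\nu}\binom{p-\nu+1}{i}E_{i}m^{p-i},$$ where $S_p^{(k)}(1,m):=m^{p}T_{p}^{(k)}(1,m)-2\sum_{\nu=0}^{p}\binom{p}{\nu}E_{\nu}^{(k)}E_{p+1-\nu}m^{\nu-1}$.
   Context: Euler polynomials $E_n(x)$ are defined by $\frac{2}{e^t+1}e^{xt}=\sum_{n=0}^{\infty}E_n(x)\frac{t^n}{n!}$ and $E_n=E_n(0)$. For $k\in\mathbb{Z}$, $\mathrm{Ei}_k(x)=\sum_{n=1}^{\infty}\frac{x^n}{n^k(n-1)!}$; the poly-Genocchi polynomials $G_n^{(k)}(x)$ are defined by $\frac{2\,\mathrm{Ei}_k(\log(1+t))}{e^t+1}e^{xt}=\sum_{n=0}^{\infty}G_n^{(k)}(x)\frac{t^n}{n!}$; the poly-Euler polynomials are $E_n^{(k)}(x)=\frac{G_{n+1}^{(k)}(x)}{n+1}$ ($n\ge0$), $E_n^{(k)}=E_n^{(k)}(0)$, and the poly-Euler functions are $\overline{E}_n^{(k)}(x)=E_n^{(k)}(x-[x])$, where $[x]$ is the greatest integer $\le x$. For positive integers $h,m,p$, the poly-Dedekind type DC sum is $T_p^{(k)}(h,m)=2\sum_{\mu=1}^{m-1}(-1)^{\mu}\frac{\mu}{m}\overline{E}_p^{(k)}\big(\frac{h\mu}{m}\big)$.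 *)

theory Defs
  imports "HOL-Computational_Algebra.Formal_Power_Series"
begin

definition euler_poly :: "nat \<Rightarrow> real \<Rightarrow> real" where
  "euler_poly n x = fact n * fps_nth (fps_const 2 / (fps_exp 1 + 1) * fps_exp x) n"

definition Ei_fps :: "int \<Rightarrow> real fps" where
  "Ei_fps k = Abs_fps (\<lambda>n. if n = 0 then 0 else 1 / (real n powi k * fact (n - 1)))"

(* poly-Genocchi polynomials: 2 Ei_k(log(1+t))/(e^t+1) e^{xt} = sum G_n^(k)(x) t^n/n! ;
   fps_ln 1 is the power series of log(1+t) *)
definition poly_genocchi :: "int \<Rightarrow> nat \<Rightarrow> real \<Rightarrow> real" where
  "poly_genocchi k n x =
     fact n * fps_nth (fps_const 2 * (Ei_fps k oo fps_ln 1) / (fps_exp 1 + 1) * fps_exp x) n"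

definition poly_euler :: "int \<Rightarrow> nat \<Rightarrow> real \<Rightarrow> real" where
  "poly_euler k n x = poly_genocchi k (n + 1) x / real (n + 1)"

definition poly_euler_fun :: "int \<Rightarrow> nat \<Rightarrow> real \<Rightarrow> real" where
  "poly_euler_fun k n x = poly_euler k n (x - of_int \<lfloor>x\<rfloor>)"

definition poly_DC_sum :: "int \<Rightarrow> nat \<Rightarrow> nat \<Rightarrow> nat \<Rightarrow> real" where
  "poly_DC_sum k p h m =
     2 * (\<Sum>\<mu>=1..m-1. (-1) ^ \<mu> * (real \<mu> / real m) * poly_euler_fun k p (real h * real \<mu> / real m))"

end

theory Submission imports Defs begin

(* Both E_n and E_n^(k) are Appell-type: their generating functions are fps_exp x times a
   series independent of x, which gives the addition formulas E(x) = sum binom * E(0) * x^j.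
   For mu < m the poly-Euler function is the polynomial itself, so m^p T_p^(k)(1,m) becomes
   a combination of alternating power sums sum_{mu<m} (-1)^mu mu^n.  For odd m these equal
   (E_n(0) + E_n(m)) / 2 by telescoping E_n(x+1) + E_n(x) = 2 x^n, and expanding E_n(m)
   produces the right-hand side, while the terms E_n(0) make up the correction in S_p^(k). *)

unbundle fps_syntax

lemma fact_mult_fps_exp_nth:
  fixes A :: "'a :: field_char_0 fps"
  shows "fact n * (A * fps_exp x) $ n = (\<Sum>j=0..n. of_nat (n choose j) * (fact j * A $ j) * x ^ (n - j))"
  unfolding fps_mult_nth sum_distrib_left
proof (rule sum.cong)
  fix j assume "j \<in> {0..n}"
  then have "of_nat (n choose j) = (fact n / (fact j * fact (n - j)) :: 'a)"
    by (simp add: binomial_fact)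
  then show "fact n * (A $ j * fps_exp x $ (n - j)) = of_nat (n choose j) * (fact j * A $ j) * x ^ (n - j)"
    by (simp add: field_simps)
qed simp

lemma euler_poly_add_formula:
  "euler_poly n x = (\<Sum>i=0..n. real (n choose i) * euler_poly i 0 * x ^ (n - i))"
proof -
  have "euler_poly i 0 = fact i * (fps_const 2 / (fps_exp 1 + 1)) $ i" for i
    by (simp add: euler_poly_def)
  then show ?thesis
    unfolding euler_poly_def fact_mult_fps_exp_nth by simp
qed

lemma euler_poly_plus_one:
  "euler_poly n (x + 1) + euler_poly n x = 2 * x ^ n"
proof -
  define B :: "real fps" where "B = fps_const 2 / (fps_exp 1 + 1)"
  have "(fps_exp 1 + 1 :: real fps) $ 0 \<noteq> 0"
    by simp
  then have "fps_exp 1 + 1 \<noteq> (0 :: real fps)" and "subdegree (fps_exp 1 + 1 :: real fps) = 0"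
    by (metis fps_zero_nth) (simp add: subdegree_eq_0_iff)
  then have "B * (fps_exp 1 + 1) = fps_const 2"
    unfolding B_def by (intro fps_times_divide_eq) auto
  moreover have "B * fps_exp (x + 1) + B * fps_exp x = B * (fps_exp 1 + 1) * fps_exp x"
    by (simp add: fps_exp_add_mult algebra_simps)
  ultimately have "B * fps_exp (x + 1) + B * fps_exp x = fps_const 2 * fps_exp x"
    by simp
  then have "fact n * (B * fps_exp (x + 1) + B * fps_exp x) $ n = 2 * x ^ n"
    by simp
  then show ?thesis
    unfolding euler_poly_def B_def by (simp add: algebra_simps)
qed

lemma sum_alternating_telescope:
  fixes f :: "nat \<Rightarrow> 'a :: comm_ring_1"
  shows "(\<Sum>\<mu><m. (-1) ^ \<mu> * (f \<mu> + f (Suc \<mu>))) = f 0 - (-1) ^ m * f m"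
  by (induction m) (simp_all add: algebra_simps)

lemma alternating_power_sum_euler_poly:
  assumes "odd m"
  shows "2 * (\<Sum>\<mu><m. (-1) ^ \<mu> * real \<mu> ^ n) = euler_poly n 0 + euler_poly n (real m)"
proof -
  have "2 * (\<Sum>\<mu><m. (-1) ^ \<mu> * real \<mu> ^ n)
      = (\<Sum>\<mu><m. (-1) ^ \<mu> * (euler_poly n (real \<mu>) + euler_poly n (real (Suc \<mu>))))"
    by (simp add: sum_distrib_left euler_poly_plus_one[of n, simplified add.commute] algebra_simps)
  also have "\<dots> = euler_poly n 0 + euler_poly n (real m)"
    using sum_alternating_telescope[of "\<lambda>\<mu>. euler_poly n (real \<mu>)" m] assms by simp
  finally show ?thesis .
qed

lemma poly_euler_add_formula:
  "poly_euler k p x = (\<Sum>\<nu>=0..p. real (p choose \<nu>) * poly_euler k \<nu> 0 * x ^ (p - \<nu>))"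
proof -
  define A :: "real fps" where "A = fps_const 2 * (Ei_fps k oo fps_ln 1) / (fps_exp 1 + 1)"
  have "A $ 0 = 0"
    unfolding A_def by (simp add: Ei_fps_def)
  have genocchi: "poly_genocchi k n x = (\<Sum>j=0..n. real (n choose j) * (fact j * A $ j) * x ^ (n - j))" for n x
    unfolding poly_genocchi_def A_def[symmetric] fact_mult_fps_exp_nth ..
  have euler0: "poly_euler k j 0 = fact j * A $ Suc j" for j
    unfolding poly_euler_def poly_genocchi_def A_def[symmetric] by (simp add: fact_Suc)
  have binom: "real (Suc p choose Suc j) * fact (Suc j) = real (Suc p) * real (p choose j) * fact j" for j
  proof -
    have "real (Suc p choose Suc j) * real (Suc j) = real (Suc p) * real (p choose j)"
      by (simp only: Suc_times_binomial_eq flip: of_nat_mult)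
    then show ?thesis
      unfolding fact_Suc of_nat_mult by (simp add: mult_ac)
  qed
  have "poly_euler k p x
      = (\<Sum>j=0..p. real (Suc p choose Suc j) * fact (Suc j) * A $ Suc j * x ^ (p - j)) / real (Suc p)"
    unfolding poly_euler_def genocchi Suc_eq_plus1[symmetric] sum.atLeast0_atMost_Suc_shift
    by (simp add: \<open>A $ 0 = 0\<close> mult.assoc)
  also have "\<dots> = (\<Sum>\<nu>=0..p. real (p choose \<nu>) * poly_euler k \<nu> 0 * x ^ (p - \<nu>))"
    unfolding sum_divide_distrib binom euler0 by (simp add: mult_ac)
  finally show ?thesis .
qed

lemma poly_DC_sum_1:
  assumes "m > 0"
  shows "poly_DC_sum k p 1 m
           = 2 * (\<Sum>\<mu><m. (-1) ^ \<mu> * (real \<mu> / real m) * poly_euler k p (real \<mu> / real m))"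
proof -
  have "{..<m} = insert 0 {1..m-1}"
    using assms by auto
  then have "poly_DC_sum k p 1 m
      = 2 * (\<Sum>\<mu><m. (-1) ^ \<mu> * (real \<mu> / real m) * poly_euler_fun k p (real \<mu> / real m))"
    unfolding poly_DC_sum_def by simp
  also have "\<dots> = 2 * (\<Sum>\<mu><m. (-1) ^ \<mu> * (real \<mu> / real m) * poly_euler k p (real \<mu> / real m))"
    by (simp add: poly_euler_fun_def floor_divide_of_nat_eq)
  finally show ?thesis .
qed

lemma power_mult_poly_euler_scaled:
  fixes M x :: real
  assumes "M \<noteq> 0"
  shows "M ^ p * ((x / M) * poly_euler k p (x / M))
           = (\<Sum>\<nu>=0..p. real (p choose \<nu>) * poly_euler k \<nu> 0 * M powi (int \<nu> - 1) * x ^ (p - \<nu> + 1))"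
  unfolding poly_euler_add_formula[of k p] sum_distrib_left
proof (rule sum.cong)
  fix \<nu> assume "\<nu> \<in> {0..p}"
  then have "M ^ p = M ^ \<nu> * M ^ (p - \<nu>)"
    by (simp flip: power_add)
  then show "M ^ p * (x / M * (real (p choose \<nu>) * poly_euler k \<nu> 0 * (x / M) ^ (p - \<nu>)))
      = real (p choose \<nu>) * poly_euler k \<nu> 0 * M powi (int \<nu> - 1) * x ^ (p - \<nu> + 1)"
    using assms by (simp add: power_int_diff power_divide field_simps)
qed simp

lemma power_mult_poly_DC_sum_1:
  assumes "m > 0"
  shows "real m ^ p * poly_DC_sum k p 1 m
           = (\<Sum>\<nu>=0..p. real (p choose \<nu>) * poly_euler k \<nu> 0 * real m powi (int \<nu> - 1)
                * (2 * (\<Sum>\<mu><m. (-1) ^ \<mu> * real \<mu> ^ (p - \<nu> + 1))))"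
proof -
  let ?M = "real m"
  have "?M \<noteq> 0"
    using assms by simp
  have "?M ^ p * poly_DC_sum k p 1 m
      = (\<Sum>\<mu><m. 2 * (-1) ^ \<mu> * (?M ^ p * ((real \<mu> / ?M) * poly_euler k p (real \<mu> / ?M))))"
    unfolding poly_DC_sum_1[OF assms] by (simp add: sum_distrib_left mult_ac)
  also have "\<dots> = (\<Sum>\<mu><m. \<Sum>\<nu>=0..p. 2 * (-1) ^ \<mu> * (real (p choose \<nu>) * poly_euler k \<nu> 0
                    * ?M powi (int \<nu> - 1) * real \<mu> ^ (p - \<nu> + 1)))"
    unfolding power_mult_poly_euler_scaled[OF \<open>?M \<noteq> 0\<close>] by (simp add: sum_distrib_left)
  also have "\<dots> = (\<Sum>\<nu>=0..p. \<Sum>\<mu><m. 2 * (-1) ^ \<mu> * (real (p choose \<nu>) * poly_euler k \<nu> 0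
                    * ?M powi (int \<nu> - 1) * real \<mu> ^ (p - \<nu> + 1)))"
    by (rule sum.swap)
  also have "\<dots> = (\<Sum>\<nu>=0..p. real (p choose \<nu>) * poly_euler k \<nu> 0 * ?M powi (int \<nu> - 1)
                * (2 * (\<Sum>\<mu><m. (-1) ^ \<mu> * real \<mu> ^ (p - \<nu> + 1))))"
    by (simp add: sum_distrib_left mult_ac)
  finally show ?thesis .
qed

lemma power_int_mult_alternating_power_sum:
  assumes "odd m" and "\<nu> \<le> p"
  shows "real m powi (int \<nu> - 1) * (2 * (\<Sum>\<mu><m. (-1) ^ \<mu> * real \<mu> ^ (p - \<nu> + 1)))
           = 2 * euler_poly (p + 1 - \<nu>) 0 * real m powi (int \<nu> - 1)
             + (\<Sum>i=0..p-\<nu>. real ((p - \<nu> + 1) choose i) * euler_poly i 0 * real m ^ (p - i))"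
proof -
  let ?M = "real m" and ?n = "Suc (p - \<nu>)"
  have "?M \<noteq> 0"
    using \<open>odd m\<close> by (intro notI) simp
  have power: "?M powi (int \<nu> - 1) * ?M ^ (?n - i) = ?M ^ (p - i)" if "i \<le> p - \<nu>" for i
  proof -
    have "int \<nu> - 1 + int (?n - i) = int (p - i)"
      using that \<open>\<nu> \<le> p\<close> by simp
    then show ?thesis
      using \<open>?M \<noteq> 0\<close> by (metis power_int_add power_int_of_nat)
  qed
  have "2 * (\<Sum>\<mu><m. (-1) ^ \<mu> * real \<mu> ^ ?n) = euler_poly ?n 0 + euler_poly ?n ?M"
    using \<open>odd m\<close> by (rule alternating_power_sum_euler_poly)
  also have "\<dots> = 2 * euler_poly ?n 0 + (\<Sum>i=0..p-\<nu>. real (?n choose i) * euler_poly i 0 * ?M ^ (?n - i))"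
    by (subst euler_poly_add_formula) (simp add: sum.atLeast0_atMost_Suc)
  finally have "?M powi (int \<nu> - 1) * (2 * (\<Sum>\<mu><m. (-1) ^ \<mu> * real \<mu> ^ ?n))
      = 2 * euler_poly ?n 0 * ?M powi (int \<nu> - 1)
        + (\<Sum>i=0..p-\<nu>. real (?n choose i) * euler_poly i 0 * (?M powi (int \<nu> - 1) * ?M ^ (?n - i)))"
    by (simp only: distrib_left sum_distrib_left mult_ac)
  also have "\<dots> = 2 * euler_poly ?n 0 * ?M powi (int \<nu> - 1)
        + (\<Sum>i=0..p-\<nu>. real (?n choose i) * euler_poly i 0 * ?M ^ (p - i))"
    by (simp add: power)
  finally show ?thesis
    using \<open>\<nu> \<le> p\<close> by (simp add: Suc_diff_le)
qed

theorem theorem10: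
  fixes k :: int and p m :: nat
  assumes "p > 0" and "m > 0" and "odd m"
  shows "real m ^ p * poly_DC_sum k p 1 m
           - 2 * (\<Sum>\<nu>=0..p. real (p choose \<nu>) * poly_euler k \<nu> 0 * euler_poly (p + 1 - \<nu>) 0
                    * real m powi (int \<nu> - 1))
         = (\<Sum>\<nu>=0..p. real (p choose \<nu>) * poly_euler k \<nu> 0 *
              (\<Sum>i=0..p-\<nu>. real ((p - \<nu> + 1) choose i) * euler_poly i 0 * real m ^ (p - i)))"
proof -
  have "real m ^ p * poly_DC_sum k p 1 m
      = (\<Sum>\<nu>=0..p. real (p choose \<nu>) * poly_euler k \<nu> 0 *
          (2 * euler_poly (p + 1 - \<nu>) 0 * real m powi (int \<nu> - 1)
           + (\<Sum>i=0..p-\<nu>. real ((p - \<nu> + 1) choose i) * euler_poly i 0 * real m ^ (p - i))))"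
    unfolding power_mult_poly_DC_sum_1[OF \<open>m > 0\<close>] mult.assoc
    by (intro sum.cong refl, subst power_int_mult_alternating_power_sum[OF \<open>odd m\<close>]) (simp_all add: mult.assoc)
  then show ?thesis
    by (simp add: sum.distrib sum_distrib_left algebra_simps)
qed

end
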